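(* Let $p:\{0,1\}^*\to[0,1]$ be a binary-coded probability distribution and consider the algorithm GenOpt described below, run on $p$ with fair random bits. For each $n\in\mathbb{N}$, the algorithm almost surely appends at least $n$ bits to $b$; the prefix $B_1\ldots B_n$ of $b$ has distribution $p_n$ (i.e. $\Pr(B_1\ldots B_n=s)=p(s)$ for every $s\in\{0,1\}^n$); and the algorithm, viewed as a generator producing $B_1\ldots B_n$, is entropy-optimal for $p_n$: the expected number of random bits drawn up to and including the moment the $n$-th bit is appended equals the minimum expected entropy cost over all random variate generators whose output distribution is $p_n$.
   Context: A binary-coded probability distribution is a map $p:\{0,1\}^*\to[0,1]$ with $p(\varepsilon)=1$ ($\varepsilon$ the empty string) and $p(b)=p(b0)+p(b1)$ for every finite binary string $b$. For $n\ge0$, $p_n$ denotes the discrete distribution on $\{0,1\}^n$ given by $s\mapsto p(s)$. Every real $z\in[0,1]$ has a unique concise binary expansion $z=(z_0.z_1z_2\ldots)_2=\sum_{i\ge0}z_i2^{-i}$ not ending in an infinite string of 1s; write $[z]_i:=z_i$. Algorithm GenOpt: it maintains a string $b$ (initially empty) and a counter $\ell$ (initially $0$) of random bits drawn, and repeats forever the following round, which appends one bit to $b$: if $[p(b0)]_\ell=1$ and $[p(b1)]_\ell=0$, append $0$; else if $[p(b0)]_\ell=0$ and $[p(b1)]_\ell=1$, append $1$; otherwise repeat: draw a fair random bit $x$ and set $\ell\leftarrow\ell+1$; if $x=0$ and $[p(b0)]_\ell=1$, append $0$ and end the round; if $x=1$ and $[p(b1)]_\ell=1$, append $1$ and end the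 round. A random variate generator for a distribution $q$ on $\{0,1\}^n$ is a partial map $Y:\{0,1\}^*\rightharpoonup\{0,1\}^n$ whose domain is prefix-free (if $u\in\mathrm{dom}(Y)$ then no proper extension of $u$ is in $\mathrm{dom}(Y)$) and exhaustive ($\sum_{u\in\mathrm{dom}(Y)}2^{-|u|}=1$), with $\sum_{u\in\mathrm{dom}(Y)}2^{-|u|}\mathbf{1}[Y(u)=s]=q(s)$ for all $s$; its expected entropy cost is $\sum_{u\in\mathrm{dom}(Y)}|u|\,2^{-|u|}$ (the expected number of fair input bits read). *)

theory Defs
  imports "HOL-Analysis.Analysis"
begin

text \<open>Binary strings are bool lists; False = 0, True = 1. Appending bit x to b is b @ [x].\<close>

definition bcpd :: "(bool list \<Rightarrow> real) \<Rightarrow> bool" where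
  "bcpd p \<longleftrightarrow> (\<forall>b. 0 \<le> p b \<and> p b \<le> 1) \<and> p [] = 1 \<and>
     (\<forall>b. p b = p (b @ [False]) + p (b @ [True]))"

text \<open>i-th digit of the concise binary expansion z = z_0.z_1z_2... of z in [0,1]
  (no expansion ending in infinitely many 1s): z_i = floor(2^i z) mod 2.\<close>
definition digit :: "real \<Rightarrow> nat \<Rightarrow> int" where
  "digit z i = \<lfloor>z * 2 ^ i\<rfloor> mod 2"

text \<open>Inner loop of a GenOpt round: draws bits from the finite input list;
  returns (appended bit, new counter, remaining input), or None if input runs out.\<close>
fun draw_loop :: "(bool list \<Rightarrow> real) \<Rightarrow> bool list \<Rightarrow> nat \<Rightarrow> bool list
    \<Rightarrow> (bool \<times> nat \<times> bool list) option" where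
  "draw_loop p b l [] = None"
| "draw_loop p b l (x # xs) =
     (if \<not> x \<and> digit (p (b @ [False])) (Suc l) = 1 then Some (False, Suc l, xs)
      else if x \<and> digit (p (b @ [True])) (Suc l) = 1 then Some (True, Suc l, xs)
      else draw_loop p b (Suc l) xs)"

definition genopt_round :: "(bool list \<Rightarrow> real) \<Rightarrow> bool list \<Rightarrow> nat \<Rightarrow> bool list
    \<Rightarrow> (bool \<times> nat \<times> bool list) option" where
  "genopt_round p b l u =
     (if digit (p (b @ [False])) l = 1 \<and> digit (p (b @ [True])) l = 0 then Some (False, l, u)
      else if digit (p (b @ [False])) l = 0 \<and> digit (p (b @ [True])) l = 1 then Some (True, l, u)
      else draw_loop p b l u)"

fun genopt_run :: "(bool list \<Rightarrow> real) \<Rightarrow> nat \<Rightarrow> bool list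
    \<Rightarrow> (bool list \<times> nat \<times> bool list) option" where
  "genopt_run p 0 u = Some ([], 0, u)"
| "genopt_run p (Suc n) u =
     (case genopt_run p n u of
        None \<Rightarrow> None
      | Some (b, l, r) \<Rightarrow>
          (case genopt_round p b l r of
             None \<Rightarrow> None
           | Some (x, l', r') \<Rightarrow> Some (b @ [x], l', r')))"

text \<open>GenOpt viewed as a generator for the first n output bits: input u is in the domain
  iff the n-th bit is appended exactly when all of u (and nothing more) has been drawn.\<close>
definition genopt_gen :: "(bool list \<Rightarrow> real) \<Rightarrow> nat \<Rightarrow> bool list \<Rightarrow> bool list option" where
  "genopt_gen p n u =
     (case genopt_run p n u of Some (b, l, r) \<Rightarrow> (if r = [] then Some b else None) | None \<Rightarrow> None)"

definition is_rvg :: "(bool list \<Rightarrow> bool list option) \<Rightarrow> nat \<Rightarrow> (bool list \<Rightarrow> real) \<Rightarrow> bool" where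
  "is_rvg Y n q \<longleftrightarrow>
     (\<forall>u \<in> dom Y. length (the (Y u)) = n) \<and>
     (\<forall>u \<in> dom Y. \<forall>v. v \<noteq> [] \<longrightarrow> u @ v \<notin> dom Y) \<and>
     ((\<lambda>u. (1/2::real) ^ length u) has_sum 1) (dom Y) \<and>
     (\<forall>s. length s = n \<longrightarrow>
        ((\<lambda>u. (1/2::real) ^ length u) has_sum q s) {u \<in> dom Y. Y u = Some s})"

text \<open>Expected entropy cost (possibly infinite, hence ennreal).\<close>
definition entropy_cost :: "(bool list \<Rightarrow> bool list option) \<Rightarrow> ennreal" where
  "entropy_cost Y = (\<Sum>\<^sub>\<infinity>u \<in> dom Y. ennreal (real (length u) * (1/2) ^ length u))"

end

theory Submission
  imports Defs
begin

(* Write K_A(J) for the sum of 2^-|u| over the inputs u in A of length at most J.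
   By induction on the output string b and on the input length m, exactly [p(b)]_m inputs
   of length m make GenOpt complete the output b once all m of their bits are read, and the
   inputs of length m after which b has been output but the next round is still undecided
   are counted by the carry of the binary addition p(b0) + p(b1) = p(b) at digit m.  Hence
   the inputs producing s contribute floor(2^J p(s)) / 2^J to K(J), so the output has
   distribution p_n.  For any generator of p_n, the inputs producing s contribute a multiple
   of 2^-J that is at most p(s), so GenOpt maximises K(J) for every J.  As the expected cost
   of a generator is the sum over J of 1 - K(J), GenOpt minimises it. *)

section \<open>Binary digits and binary-coded distributions\<close>

definition dyadic_floor :: "real \<Rightarrow> nat \<Rightarrow> int" where
  "dyadic_floor z k = \<lfloor>z * 2 ^ k\<rfloor>"

lemma digit_0_or_1: "digit z k = 0 \<or> digit z k = 1"
  unfolding digit_def by presburger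

lemma dyadic_floor_Suc: "dyadic_floor z (Suc k) = 2 * dyadic_floor z k + digit z (Suc k)"
proof -
  define y where "y = z * 2 ^ k"
  have unfolded: "dyadic_floor z (Suc k) = \<lfloor>2 * y\<rfloor>" "digit z (Suc k) = \<lfloor>2 * y\<rfloor> mod 2"
      "dyadic_floor z k = \<lfloor>y\<rfloor>"
    by (simp_all add: dyadic_floor_def digit_def y_def mult_ac)
  have "\<lfloor>2 * y\<rfloor> = 2 * \<lfloor>y\<rfloor> \<or> \<lfloor>2 * y\<rfloor> = 2 * \<lfloor>y\<rfloor> + 1"
    by linarith
  then show ?thesis
    unfolding unfolded by auto
qed

lemma dyadic_floor_0: "0 \<le> z \<Longrightarrow> z \<le> 1 \<Longrightarrow> dyadic_floor z 0 = digit z 0"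
  by (cases "z = 1") (simp_all add: dyadic_floor_def digit_def floor_eq_iff)

lemma dyadic_floor_add_bounds:
  "dyadic_floor a k + dyadic_floor c k \<le> dyadic_floor (a + c) k"
  "dyadic_floor (a + c) k \<le> dyadic_floor a k + dyadic_floor c k + 1"
  unfolding dyadic_floor_def distrib_right by linarith+

lemma digit_1: "digit 1 m = (if m = 0 then 1 else 0)"
proof -
  have "\<lfloor>(2::real) ^ m\<rfloor> = 2 ^ m"
    by (metis floor_of_int of_int_numeral of_int_power)
  then show ?thesis
    by (cases m) (simp_all add: digit_def)
qed

lemma sum_digits_eq_dyadic_floor:
  assumes "0 \<le> z" "z \<le> 1"
  shows "(\<Sum>m\<le>J. digit z m * (1/2) ^ m) = dyadic_floor z J / 2 ^ J"
proof (induction J)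
  case 0
  then show ?case using assms by (simp add: dyadic_floor_0)
next
  case (Suc J)
  then show ?case by (simp add: dyadic_floor_Suc field_simps power_divide)
qed

lemma dyadic_floor_LIMSEQ: "(\<lambda>J. dyadic_floor z J / 2 ^ J) \<longlonglongrightarrow> z"
proof (rule tendsto_sandwich[of "\<lambda>J. z - (1/2) ^ J" _ sequentially "\<lambda>_. z"])
  have "z * 2 ^ J - 1 \<le> dyadic_floor z J" "dyadic_floor z J \<le> z * 2 ^ J" for J
    unfolding dyadic_floor_def by linarith+
  then have "z - (1/2) ^ J \<le> dyadic_floor z J / 2 ^ J" "dyadic_floor z J / 2 ^ J \<le> z" for J
    by (simp_all add: pos_le_divide_eq pos_divide_le_eq left_diff_distrib power_one_over)
  then show "\<forall>\<^sub>F J in sequentially. z - (1/2) ^ J \<le> dyadic_floor z J / 2 ^ J"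
    "\<forall>\<^sub>F J in sequentially. dyadic_floor z J / 2 ^ J \<le> z"
    by simp_all
  show "(\<lambda>J. z - (1/2::real) ^ J) \<longlonglongrightarrow> z"
    using tendsto_diff[OF tendsto_const LIMSEQ_realpow_zero[of "1/2::real"]] by simp
qed simp

lemma bcpd_bounds: "bcpd p \<Longrightarrow> 0 \<le> p b \<and> p b \<le> 1"
  unfolding bcpd_def by blast

lemma bcpd_split: "bcpd p \<Longrightarrow> p b = p (b @ [False]) + p (b @ [True])"
  unfolding bcpd_def by blast

lemma sum_bcpd_length: "bcpd p \<Longrightarrow> (\<Sum>s | length s = n. p s) = 1"
proof (induction n)
  case 0
  then have "p [] = 1"
    unfolding bcpd_def by blast
  moreover have "{s :: bool list. length s = 0} = {[]}"
    by auto
  ultimately show ?case by simp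
next
  case (Suc n)
  have strings_Suc: "{s :: bool list. length s = Suc n} = (\<lambda>(b, x). b @ [x]) ` ({s. length s = n} \<times> UNIV)"
  proof (intro equalityI subsetI)
    fix s :: "bool list"
    assume "s \<in> {s. length s = Suc n}"
    then show "s \<in> (\<lambda>(b, x). b @ [x]) ` ({s. length s = n} \<times> UNIV)"
      by (cases s rule: rev_exhaust) auto
  qed auto
  have inj: "inj_on (\<lambda>(b, x :: bool). b @ [x]) ({s. length s = n} \<times> UNIV)"
    by (auto simp: inj_on_def)
  have "(\<Sum>s | length s = Suc n. p s) = (\<Sum>(b, x) \<in> {s. length s = n} \<times> UNIV. p (b @ [x]))"
    unfolding strings_Suc by (subst sum.reindex[OF inj]) (simp add: case_prod_beta)
  also have "\<dots> = (\<Sum>b | length b = n. \<Sum>x\<in>UNIV. p (b @ [x]))"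
    by (rule sum.cartesian_product[symmetric])
  also have "\<dots> = (\<Sum>b | length b = n. p b)"
  proof (rule sum.cong)
    show "(\<Sum>x\<in>UNIV. p (b @ [x])) = p b" for b
      using bcpd_split[OF Suc.prems, of b] by (simp add: UNIV_bool)
  qed simp
  finally show ?case using Suc by simp
qed

section \<open>Runs of GenOpt\<close>

definition forced_bit :: "(bool list \<Rightarrow> real) \<Rightarrow> bool list \<Rightarrow> nat \<Rightarrow> bool option" where
  "forced_bit p b l =
     (if digit (p (b @ [False])) l = 1 \<and> digit (p (b @ [True])) l = 0 then Some False
      else if digit (p (b @ [False])) l = 0 \<and> digit (p (b @ [True])) l = 1 then Some True
      else None)"

lemma forced_bit_eq_Some:
  "forced_bit p b l = Some x \<longleftrightarrow> digit (p (b @ [x])) l = 1 \<and> digit (p (b @ [\<not> x])) l = 0"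
  by (cases x) (auto simp: forced_bit_def)

lemma forced_bit_eq_None:
  "forced_bit p b l = None \<longleftrightarrow> digit (p (b @ [False])) l = digit (p (b @ [True])) l"
  using digit_0_or_1[of "p (b @ [False])" l] digit_0_or_1[of "p (b @ [True])" l]
  by (auto simp: forced_bit_def)

lemma genopt_round_Nil:
  "genopt_round p b l [] = map_option (\<lambda>x. (x, l, [])) (forced_bit p b l)"
  by (simp add: genopt_round_def forced_bit_def)

lemma draw_loop_Cons:
  "draw_loop p b l (x # xs) =
     (if digit (p (b @ [x])) (Suc l) = 1 then Some (x, Suc l, xs) else draw_loop p b (Suc l) xs)"
  by (cases x) simp_all

lemma draw_loop_snoc:
  "draw_loop p b l (w @ [y]) =
     (case draw_loop p b l w of
        Some (x, l', r) \<Rightarrow> Some (x, l', r @ [y])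
      | None \<Rightarrow> if digit (p (b @ [y])) (Suc (l + length w)) = 1
               then Some (y, Suc (l + length w), []) else None)"
  by (induction w arbitrary: l)
    (auto simp: draw_loop_Cons simp del: draw_loop.simps(2) split: option.splits)

lemma genopt_round_snoc:
  "genopt_round p b l (w @ [y]) =
     (case genopt_round p b l w of
        Some (x, l', r) \<Rightarrow> Some (x, l', r @ [y])
      | None \<Rightarrow> if digit (p (b @ [y])) (Suc (l + length w)) = 1
               then Some (y, Suc (l + length w), []) else None)"
  by (simp add: genopt_round_def draw_loop_snoc)

lemma genopt_round_append:
  "genopt_round p b l u = Some (x, l', r) \<Longrightarrow> genopt_round p b l (u @ v) = Some (x, l', r @ v)"
proof (induction v rule: rev_induct)
  case (snoc y v)
  then show ?case
    using genopt_round_snoc[of p b l "u @ v" y] by simp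
qed simp

lemma genopt_round_consumed:
  "genopt_round p b l u = Some (x, l', r) \<Longrightarrow> \<exists>w. u = w @ r \<and> l' = l + length w"
proof (induction u arbitrary: r rule: rev_induct)
  case Nil
  then show ?case by (auto simp: genopt_round_Nil)
next
  case (snoc y u)
  consider "genopt_round p b l u = None" | x0 l0 r0 where "genopt_round p b l u = Some (x0, l0, r0)"
    by (cases "genopt_round p b l u") auto
  then show ?case
  proof cases
    case 1
    with snoc.prems have "r = [] \<and> l' = Suc (l + length u)"
      by (simp add: genopt_round_snoc split: if_splits)
    then show ?thesis by (intro exI[of _ "u @ [y]"]) simp
  next
    case 2
    with snoc.prems have "genopt_round p b l u = Some (x, l', r0)" "r = r0 @ [y]"
      by (simp_all add: genopt_round_snoc)
    then obtain w where "u = w @ r0" "l' = l + length w"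
      using snoc.IH by blast
    with \<open>r = r0 @ [y]\<close> show ?thesis by (intro exI[of _ w]) simp
  qed
qed

lemma genopt_round_cut:
  "genopt_round p b l (u @ v) = Some (x, l', r @ v) \<Longrightarrow> genopt_round p b l u = Some (x, l', r)"
proof (induction v rule: rev_induct)
  case (snoc y v)
  consider "genopt_round p b l (u @ v) = None"
    | x0 l0 r0 where "genopt_round p b l (u @ v) = Some (x0, l0, r0)"
    by (cases "genopt_round p b l (u @ v)") auto
  then show ?case
  proof cases
    case 1
    with snoc.prems show ?thesis
      using genopt_round_snoc[of p b l "u @ v" y] by (simp split: if_splits)
  next
    case 2
    with snoc.prems have "genopt_round p b l (u @ v) = Some (x, l', r @ v)"
      using genopt_round_snoc[of p b l "u @ v" y] by simp
    then show ?thesis by (rule snoc.IH)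
  qed
qed simp

lemma genopt_run_SucE:
  assumes "genopt_run p (Suc n) u = Some (b', l', r')"
  obtains b l r x where "genopt_run p n u = Some (b, l, r)" "genopt_round p b l r = Some (x, l', r')"
    "b' = b @ [x]"
  using assms by (auto split: option.splits)

lemma genopt_run_Suc_snoc_iff:
  "genopt_run p (Suc n) u = Some (b @ [x], l', r') \<longleftrightarrow>
     (\<exists>l r. genopt_run p n u = Some (b, l, r) \<and> genopt_round p b l r = Some (x, l', r'))"
  by (auto split: option.splits)

lemma genopt_run_append:
  "genopt_run p n u = Some (b, l, r) \<Longrightarrow> genopt_run p n (u @ v) = Some (b, l, r @ v)"
proof (induction n arbitrary: b l r)
  case (Suc n)
  from Suc.prems show ?case
    by (rule genopt_run_SucE) (simp add: Suc.IH genopt_round_append)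
qed simp

lemma genopt_run_SomeD:
  "genopt_run p n u = Some (b, l, r) \<Longrightarrow> length b = n \<and> (\<exists>w. u = w @ r \<and> l = length w)"
proof (induction n arbitrary: b l r)
  case (Suc n)
  from Suc.prems obtain b0 l0 r0 x where
    run: "genopt_run p n u = Some (b0, l0, r0)" and
    round: "genopt_round p b0 l0 r0 = Some (x, l, r)" and "b = b0 @ [x]"
    by (rule genopt_run_SucE)
  moreover obtain w where "length b0 = n" "u = w @ r0" "l0 = length w"
    using Suc.IH[OF run] by blast
  moreover obtain w' where "r0 = w' @ r" "l = l0 + length w'"
    using genopt_round_consumed[OF round] by blast
  ultimately show ?case
    by (intro conjI exI[of _ "w @ w'"]) auto
qed simp

lemma genopt_run_cut:
  "genopt_run p n (u @ v) = Some (b, l, r @ v) \<Longrightarrow> genopt_run p n u = Some (b, l, r)"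
proof (induction n arbitrary: b l r)
  case (Suc n)
  from Suc.prems obtain b0 l0 r0 x where
    run: "genopt_run p n (u @ v) = Some (b0, l0, r0)" and
    round: "genopt_round p b0 l0 r0 = Some (x, l, r @ v)" and "b = b0 @ [x]"
    by (rule genopt_run_SucE)
  moreover obtain w where "r0 = (w @ r) @ v"
    using genopt_round_consumed[OF round] by auto
  ultimately show ?case
    using Suc.IH[of b0 l0 "w @ r"] genopt_round_cut[of p b0 l0 "w @ r" v x l r] by simp
qed simp

lemma genopt_run_snoc_iff:
  "genopt_run p n (u @ [y]) = Some (b, l, r @ [y]) \<longleftrightarrow> genopt_run p n u = Some (b, l, r)"
  using genopt_run_append genopt_run_cut by blast

section \<open>Counting inputs by output\<close>

lemma finite_length_eq: "finite {u :: bool list. length u = n}"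
  using finite_lists_length_eq[of "UNIV :: bool set" n] by simp

lemma finite_length_le: "finite {u \<in> A. length (u :: bool list) \<le> J}"
  by (rule finite_subset[OF _ finite_lists_length_le[of UNIV J]]) auto

(* u \<in> arrivals p b m: the last bit of b is appended once exactly the m bits of u are read.
   u \<in> pending p b m: b has been output and the next round has read the rest of u without
   appending a bit. *)
definition arrivals :: "(bool list \<Rightarrow> real) \<Rightarrow> bool list \<Rightarrow> nat \<Rightarrow> bool list set" where
  "arrivals p b m = {u. length u = m \<and> genopt_run p (length b) u = Some (b, m, [])}"

definition pending :: "(bool list \<Rightarrow> real) \<Rightarrow> bool list \<Rightarrow> nat \<Rightarrow> bool list set" where
  "pending p b m = {u. length u = m \<and>
     (\<exists>l r. genopt_run p (length b) u = Some (b, l, r) \<and> genopt_round p b l r = None)}"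

lemma finite_arrivals: "finite (arrivals p b m)"
  by (rule finite_subset[OF _ finite_length_eq[of m]]) (auto simp: arrivals_def)

lemma finite_pending: "finite (pending p b m)"
  by (rule finite_subset[OF _ finite_length_eq[of m]]) (auto simp: pending_def)

lemma arrivals_Nil: "arrivals p [] m = (if m = 0 then {[]} else {})"
  by (auto simp: arrivals_def)

lemma genopt_run_unread_cases:
  assumes "genopt_run p (length b) u = Some (b, l, r)"
  obtains (all_read) "r = []" "l = length u" "u \<in> arrivals p b (length u)"
  | (unread) v w y where "u = v @ [y]" "r = w @ [y]" "genopt_run p (length b) v = Some (b, l, w)"
      "length v = l + length w"
proof (cases r rule: rev_exhaust)
  case Nil
  with assms genopt_run_SomeD[OF assms] show ?thesis
    by (intro all_read) (auto simp: arrivals_def)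
next
  case (snoc w y)
  with genopt_run_SomeD[OF assms] obtain z where "u = (z @ w) @ [y]" "l = length z"
    by auto
  with assms snoc genopt_run_snoc_iff[of p "length b" "z @ w" y b l w] show ?thesis
    by (intro unread[of "z @ w"]) auto
qed

lemma arrivals_snoc:
  "arrivals p (b @ [x]) m =
     (if forced_bit p b m = Some x then arrivals p b m else {}) \<union>
     (if 0 < m \<and> digit (p (b @ [x])) m = 1 then (\<lambda>v. v @ [x]) ` pending p b (m - 1) else {})"
  (is "_ = ?A \<union> ?B")
proof (intro equalityI subsetI)
  fix u
  assume "u \<in> arrivals p (b @ [x]) m"
  then have len: "length u = m" and "genopt_run p (Suc (length b)) u = Some (b @ [x], m, [])"
    by (simp_all add: arrivals_def)
  then obtain l r where run: "genopt_run p (length b) u = Some (b, l, r)"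
    and round: "genopt_round p b l r = Some (x, m, [])"
    using genopt_run_Suc_snoc_iff by blast
  from run show "u \<in> ?A \<union> ?B"
  proof (cases rule: genopt_run_unread_cases)
    case all_read
    with round len show ?thesis
      by (auto simp: genopt_round_Nil)
  next
    case (unread v w y)
    with round have "genopt_round p b l w = None" "y = x" "m = Suc (l + length w)"
        "digit (p (b @ [x])) m = 1"
      by (auto simp: genopt_round_snoc split: option.splits if_splits)
    with unread show ?thesis
      by (auto simp: pending_def)
  qed
next
  fix u
  assume "u \<in> ?A \<union> ?B"
  then show "u \<in> arrivals p (b @ [x]) m"
  proof
    assume "u \<in> ?A"
    then show ?thesis
      by (auto simp: arrivals_def genopt_round_Nil split: if_splits)
  next
    assume "u \<in> ?B"
    then obtain v l r where "u = v @ [x]" "0 < m" "digit (p (b @ [x])) m = 1" "length v = m - 1"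
      and run: "genopt_run p (length b) v = Some (b, l, r)" and "genopt_round p b l r = None"
      by (auto simp: pending_def split: if_splits)
    moreover have "length v = l + length r"
      using genopt_run_SomeD[OF run] by auto
    ultimately show ?thesis
      by (auto simp: arrivals_def genopt_run_append genopt_round_snoc)
  qed
qed

lemma pending_eq:
  "pending p b m =
     (if forced_bit p b m = None then arrivals p b m else {}) \<union>
     (if 0 < m then (\<lambda>(v, y). v @ [y]) ` (pending p b (m - 1) \<times> {y. digit (p (b @ [y])) m \<noteq> 1})
      else {})"
  (is "_ = ?A \<union> ?B")
proof (intro equalityI subsetI)
  fix u
  assume "u \<in> pending p b m"
  then obtain l r where len: "length u = m" and run: "genopt_run p (length b) u = Some (b, l, r)"
    and round: "genopt_round p b l r = None"
    by (auto simp: pending_def)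
  from run show "u \<in> ?A \<union> ?B"
  proof (cases rule: genopt_run_unread_cases)
    case all_read
    with round len show ?thesis
      by (auto simp: genopt_round_Nil)
  next
    case (unread v w y)
    with round have "genopt_round p b l w = None" "digit (p (b @ [y])) (Suc (l + length w)) \<noteq> 1"
      by (auto simp: genopt_round_snoc split: option.splits if_splits)
    with unread len show ?thesis
      by (force simp: pending_def)
  qed
next
  fix u
  assume "u \<in> ?A \<union> ?B"
  then show "u \<in> pending p b m"
  proof
    assume "u \<in> ?A"
    then show ?thesis
      by (auto simp: arrivals_def pending_def genopt_round_Nil split: if_splits)
  next
    assume "u \<in> ?B"
    then obtain v y l r where "u = v @ [y]" "0 < m" "digit (p (b @ [y])) m \<noteq> 1" "length v = m - 1"
      and run: "genopt_run p (length b) v = Some (b, l, r)" and "genopt_round p b l r = None"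
      by (auto simp: pending_def split: if_splits)
    moreover have "length v = l + length r"
      using genopt_run_SomeD[OF run] by auto
    ultimately show ?thesis
      by (auto simp: pending_def genopt_run_append genopt_round_snoc)
  qed
qed

lemma snoc_pending_notin_arrivals:
  assumes "v \<in> pending p b k"
  shows "v @ [y] \<notin> arrivals p b m"
proof
  from assms obtain l r where run: "genopt_run p (length b) v = Some (b, l, r)"
    by (auto simp: pending_def)
  assume "v @ [y] \<in> arrivals p b m"
  then have "genopt_run p (length b) (v @ [y]) = Some (b, m, [])"
    by (simp add: arrivals_def)
  with genopt_run_append[OF run, of "[y]"] show False
    by simp
qed

lemma card_arrivals_snoc:
  "card (arrivals p (b @ [x]) m) =
     (if forced_bit p b m = Some x then card (arrivals p b m) else 0) +
     (if digit (p (b @ [x])) m = 1 then (if m = 0 then 0 else card (pending p b (m - 1))) else 0)"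
proof -
  have "card (arrivals p (b @ [x]) m) =
      card (if forced_bit p b m = Some x then arrivals p b m else {}) +
      card (if 0 < m \<and> digit (p (b @ [x])) m = 1 then (\<lambda>v. v @ [x]) ` pending p b (m - 1) else {})"
    unfolding arrivals_snoc
    by (rule card_Un_disjoint) (auto simp: finite_arrivals finite_pending dest: snoc_pending_notin_arrivals)
  moreover have "card ((\<lambda>v. v @ [x]) ` pending p b (m - 1)) = card (pending p b (m - 1))"
    by (rule card_image) (simp add: inj_on_def)
  ultimately show ?thesis
    by simp
qed

lemma card_pending:
  "card (pending p b m) =
     (if forced_bit p b m = None then card (arrivals p b m) else 0) +
     (if m = 0 then 0 else card (pending p b (m - 1))) * card {y. digit (p (b @ [y])) m \<noteq> 1}"
proof -
  define Y where "Y = {y. digit (p (b @ [y])) m \<noteq> 1}"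
  have "card (pending p b m) =
      card (if forced_bit p b m = None then arrivals p b m else {}) +
      card (if 0 < m then (\<lambda>(v, y). v @ [y]) ` (pending p b (m - 1) \<times> Y) else {})"
    unfolding pending_eq[of p b m] Y_def[symmetric]
    by (rule card_Un_disjoint) (auto simp: finite_arrivals finite_pending dest: snoc_pending_notin_arrivals)
  moreover have "inj_on (\<lambda>(v, y). v @ [y]) (pending p b (m - 1) \<times> Y)"
    by (auto simp: inj_on_def)
  then have "card ((\<lambda>(v, y). v @ [y]) ` (pending p b (m - 1) \<times> Y)) = card (pending p b (m - 1)) * card Y"
    by (simp add: card_image card_cartesian_product)
  ultimately show ?thesis
    by (simp add: Y_def)
qed

lemma card_Collect_bool: "card {y :: bool. Q y} = of_bool (Q False) + of_bool (Q True)"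
proof -
  have "{y. Q y} = (if Q False then {False} else {}) \<union> (if Q True then {True} else {})"
  proof (rule set_eqI)
    show "y \<in> {y. Q y} \<longleftrightarrow> y \<in> (if Q False then {False} else {}) \<union> (if Q True then {True} else {})"
      for y by (cases y) auto
  qed
  then show ?thesis
    by (cases "Q False"; cases "Q True") simp_all
qed

lemma card_digit_ne_1:
  "int (card {y. digit (p (b @ [y])) m \<noteq> 1}) =
     (1 - digit (p (b @ [False])) m) + (1 - digit (p (b @ [True])) m)"
  using digit_0_or_1[of "p (b @ [False])" m] digit_0_or_1[of "p (b @ [True])" m]
  by (auto simp: card_Collect_bool)

(* The carry into digit m in the binary addition p(b0) + p(b1) = p(b). *)
definition carry :: "(bool list \<Rightarrow> real) \<Rightarrow> bool list \<Rightarrow> nat \<Rightarrow> int" where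
  "carry p b m = dyadic_floor (p b) m - dyadic_floor (p (b @ [False])) m - dyadic_floor (p (b @ [True])) m"

lemma carry_bounds:
  assumes "bcpd p"
  shows "0 \<le> carry p b m \<and> carry p b m \<le> 1"
proof -
  have "p b = p (b @ [False]) + p (b @ [True])"
    by (rule bcpd_split[OF assms])
  then show ?thesis
    using dyadic_floor_add_bounds[where a = "p (b @ [False])" and c = "p (b @ [True])" and k = m]
    by (simp add: carry_def)
qed

lemma carry_recurrence:
  assumes "bcpd p"
  shows "carry p b m = 2 * (if m = 0 then 0 else carry p b (m - 1))
           + digit (p b) m - digit (p (b @ [False])) m - digit (p (b @ [True])) m"
proof (cases m)
  case 0
  with bcpd_bounds[OF assms] show ?thesis
    by (simp add: carry_def dyadic_floor_0)
next
  case (Suc k)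
  then show ?thesis
    by (simp add: carry_def dyadic_floor_Suc)
qed

(* d, d0, d1: the m-th digits of p(b), p(b0), p(b1); c: the carry into digit m - 1. *)
lemma pending_count_arith:
  fixes d d0 d1 c :: int
  assumes "d = 0 \<or> d = 1" "d0 = 0 \<or> d0 = 1" "d1 = 0 \<or> d1 = 1" "c = 0 \<or> c = 1"
    and "0 \<le> 2 * c + d - d0 - d1" "2 * c + d - d0 - d1 \<le> 1"
  shows "(if d0 = d1 then d else 0) + c * ((1 - d0) + (1 - d1)) = 2 * c + d - d0 - d1"
  using assms(1-4) by (elim disjE) (use assms(5,6) in simp_all)

lemma arrival_count_arith:
  fixes d dx dy c :: int
  assumes "d = 0 \<or> d = 1" "dx = 0 \<or> dx = 1" "dy = 0 \<or> dy = 1" "c = 0 \<or> c = 1"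
    and "0 \<le> 2 * c + d - dx - dy" "2 * c + d - dx - dy \<le> 1"
  shows "(if dx = 1 \<and> dy = 0 then d else 0) + (if dx = 1 then c else 0) = dx"
  using assms(1-4) by (elim disjE) (use assms(5,6) in simp_all)

lemma card_pending_eq_carry:
  assumes "bcpd p" and card_arrivals: "\<And>m. int (card (arrivals p b m)) = digit (p b) m"
  shows "int (card (pending p b m)) = carry p b m"
proof (induction m rule: less_induct)
  case (less m)
  define c where "c = (if m = 0 then 0 else carry p b (m - 1))"
  have c_card: "int (if m = 0 then 0 else card (pending p b (m - 1))) = c"
    using less by (simp add: c_def)
  have c_01: "c = 0 \<or> c = 1"
    using carry_bounds[OF assms(1), of b "m - 1"] by (auto simp: c_def)
  have rec: "carry p b m = 2 * c + digit (p b) m - digit (p (b @ [False])) m - digit (p (b @ [True])) m"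
    using carry_recurrence[OF assms(1)] by (simp add: c_def)
  then have "0 \<le> 2 * c + digit (p b) m - digit (p (b @ [False])) m - digit (p (b @ [True])) m"
      "2 * c + digit (p b) m - digit (p (b @ [False])) m - digit (p (b @ [True])) m \<le> 1"
    using carry_bounds[OF assms(1), of b m] by linarith+
  note count = pending_count_arith[OF digit_0_or_1 digit_0_or_1 digit_0_or_1 c_01 this]
  have "int (card (pending p b m)) =
      (if forced_bit p b m = None then digit (p b) m else 0)
      + c * ((1 - digit (p (b @ [False])) m) + (1 - digit (p (b @ [True])) m))"
    unfolding card_pending[of p b m] of_nat_add of_nat_mult c_card[symmetric] card_arrivals[symmetric]
      card_digit_ne_1[symmetric]
    by simp
  then show ?case
    using count rec by (simp only: forced_bit_eq_None)
qed

lemma card_arrivals_eq_digit: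
  assumes "bcpd p"
  shows "int (card (arrivals p b m)) = digit (p b) m"
proof (induction b arbitrary: m rule: rev_induct)
  case Nil
  have "p [] = 1"
    using assms unfolding bcpd_def by blast
  then show ?case
    by (simp add: arrivals_Nil digit_1)
next
  case (snoc x b)
  define c where "c = (if m = 0 then 0 else carry p b (m - 1))"
  have c_card: "int (if m = 0 then 0 else card (pending p b (m - 1))) = c"
    using card_pending_eq_carry[OF assms snoc] by (simp add: c_def)
  have c_01: "c = 0 \<or> c = 1"
    using carry_bounds[OF assms(1), of b "m - 1"] by (auto simp: c_def)
  have "carry p b m = 2 * c + digit (p b) m - digit (p (b @ [x])) m - digit (p (b @ [\<not> x])) m"
    using carry_recurrence[OF assms(1), of b m] by (cases x) (simp_all add: c_def)
  then have "0 \<le> 2 * c + digit (p b) m - digit (p (b @ [x])) m - digit (p (b @ [\<not> x])) m"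
      "2 * c + digit (p b) m - digit (p (b @ [x])) m - digit (p (b @ [\<not> x])) m \<le> 1"
    using carry_bounds[OF assms(1), of b m] by linarith+
  note count = arrival_count_arith[OF digit_0_or_1 digit_0_or_1 digit_0_or_1 c_01 this]
  have "int (card (arrivals p (b @ [x]) m)) =
      (if forced_bit p b m = Some x then digit (p b) m else 0) + (if digit (p (b @ [x])) m = 1 then c else 0)"
    unfolding card_arrivals_snoc of_nat_add c_card[symmetric] snoc[symmetric] by simp
  then show ?case
    using count by (simp only: forced_bit_eq_Some)
qed

section \<open>Kraft sums and entropy cost\<close>

definition kraft_partial :: "bool list set \<Rightarrow> nat \<Rightarrow> real" where
  "kraft_partial A J = (\<Sum>u \<in> {u \<in> A. length u \<le> J}. (1/2) ^ length u)"

lemma finite_subset_length_le: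
  assumes "finite F" "F \<subseteq> A"
  obtains J where "F \<subseteq> {u \<in> A. length (u :: bool list) \<le> J}"
proof
  show "F \<subseteq> {u \<in> A. length u \<le> Max (length ` F)}"
    using assms by (auto intro: Max_ge)
qed

lemma sum_le_kraft_partial:
  "F \<subseteq> {u \<in> A. length u \<le> J} \<Longrightarrow> (\<Sum>u\<in>F. (1/2) ^ length u) \<le> kraft_partial A J"
  unfolding kraft_partial_def by (rule sum_mono2[OF finite_length_le]) auto

lemma kraft_partial_mono: "J \<le> J' \<Longrightarrow> kraft_partial A J \<le> kraft_partial A J'"
  unfolding kraft_partial_def by (rule sum_mono2[OF finite_length_le]) auto

lemma kraft_partial_le_has_sum:
  assumes "((\<lambda>u. (1/2) ^ length u) has_sum x) A"
  shows "kraft_partial A J \<le> x"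
  unfolding kraft_partial_def
  by (rule has_sum_mono_neutral[OF has_sum_finite[OF finite_length_le] assms]) auto

lemma has_sum_imp_kraft_partial_LIMSEQ:
  assumes has_sum: "((\<lambda>u. (1/2) ^ length u) has_sum x) A"
  shows "kraft_partial A \<longlonglongrightarrow> x"
proof (rule order_tendstoI)
  fix a
  assume "a < x"
  with has_sum have "eventually (\<lambda>F. a < (\<Sum>u\<in>F. (1/2) ^ length u)) (finite_subsets_at_top A)"
    unfolding has_sum_def by (rule order_tendstoD(1))
  then obtain F where F: "finite F" "F \<subseteq> A" "a < (\<Sum>u\<in>F. (1/2) ^ length u)"
    unfolding eventually_finite_subsets_at_top by blast
  obtain J where "F \<subseteq> {u \<in> A. length u \<le> J}"
    using F(1,2) by (rule finite_subset_length_le)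
  then have "(\<Sum>u\<in>F. (1/2) ^ length u) \<le> kraft_partial A J"
    by (rule sum_le_kraft_partial)
  then have "a < kraft_partial A J'" if "J \<le> J'" for J'
    using F(3) kraft_partial_mono[OF that, of A] by linarith
  then show "eventually (\<lambda>J. a < kraft_partial A J) sequentially"
    by (auto simp: eventually_sequentially)
next
  fix a
  assume "x < a"
  then have "kraft_partial A J < a" for J
    using kraft_partial_le_has_sum[OF has_sum, of J] by linarith
  then show "eventually (\<lambda>J. kraft_partial A J < a) sequentially"
    by simp
qed

lemma kraft_partial_LIMSEQ_imp_has_sum:
  assumes lim: "kraft_partial A \<longlonglongrightarrow> x"
  shows "((\<lambda>u. (1/2) ^ length u) has_sum x) A"
  unfolding has_sum_def
proof (rule order_tendstoI)
  fix a
  assume "a < x"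
  with lim have "eventually (\<lambda>J. a < kraft_partial A J) sequentially"
    by (rule order_tendstoD(1))
  then obtain J where J: "a < kraft_partial A J"
    by (auto simp: eventually_sequentially)
  show "eventually (\<lambda>F. a < (\<Sum>u\<in>F. (1/2) ^ length u)) (finite_subsets_at_top A)"
    unfolding eventually_finite_subsets_at_top
  proof (intro exI conjI allI impI)
    fix F
    assume "finite F \<and> {u \<in> A. length u \<le> J} \<subseteq> F \<and> F \<subseteq> A"
    then have "kraft_partial A J \<le> (\<Sum>u\<in>F. (1/2) ^ length u)"
      unfolding kraft_partial_def by (intro sum_mono2) auto
    with J show "a < (\<Sum>u\<in>F. (1/2) ^ length u)"
      by simp
  qed (auto simp: finite_length_le)
next
  fix a
  assume "x < a"
  have le_x: "kraft_partial A J \<le> x" for J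
    by (rule incseq_le[OF _ lim]) (simp add: incseq_def kraft_partial_mono)
  show "eventually (\<lambda>F. (\<Sum>u\<in>F. (1/2) ^ length u) < a) (finite_subsets_at_top A)"
  proof (rule eventually_finite_subsets_at_top_weakI)
    fix F
    assume "finite F" "F \<subseteq> A"
    then obtain J where "F \<subseteq> {u \<in> A. length u \<le> J}"
      by (rule finite_subset_length_le)
    then have "(\<Sum>u\<in>F. (1/2) ^ length u) \<le> kraft_partial A J"
      by (rule sum_le_kraft_partial)
    with le_x[of J] \<open>x < a\<close> show "(\<Sum>u\<in>F. (1/2) ^ length u) < a"
      by linarith
  qed
qed

(* The partial sum is a multiple of 2^-J that is at most x. *)
lemma kraft_partial_le_dyadic_floor:
  assumes "((\<lambda>u. (1/2) ^ length u) has_sum x) A"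
  shows "kraft_partial A J \<le> dyadic_floor x J / 2 ^ J"
proof -
  define N where "N = (\<Sum>u \<in> {u \<in> A. length u \<le> J}. (2::nat) ^ (J - length u))"
  have "(1/2::real) ^ length u = 2 ^ (J - length u) / 2 ^ J" if "length u \<le> J" for u :: "bool list"
    using that by (simp add: power_diff power_one_over)
  then have K_eq: "kraft_partial A J = N / 2 ^ J"
    unfolding kraft_partial_def N_def by (simp add: sum_divide_distrib)
  with kraft_partial_le_has_sum[OF assms, of J] have "N \<le> x * 2 ^ J"
    by (simp add: divide_le_eq)
  then have "int N \<le> dyadic_floor x J"
    unfolding dyadic_floor_def by (simp add: le_floor_iff)
  then show ?thesis
    unfolding K_eq by (simp add: divide_right_mono)
qed

lemma kraft_partial_by_length:
  "kraft_partial A J = (\<Sum>m\<le>J. card {u \<in> A. length u = m} * (1/2) ^ m)"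
proof (induction J)
  case 0
  then show ?case
    by (simp add: kraft_partial_def)
next
  case (Suc J)
  have "{u \<in> A. length u \<le> Suc J} = {u \<in> A. length u \<le> J} \<union> {u \<in> A. length u = Suc J}"
    by auto
  moreover have "finite {u \<in> A. length u = Suc J}"
    by (rule finite_subset[OF _ finite_length_eq[of "Suc J"]]) auto
  ultimately have "kraft_partial A (Suc J) =
      kraft_partial A J + (\<Sum>u \<in> {u \<in> A. length u = Suc J}. (1/2) ^ length u)"
    unfolding kraft_partial_def by (simp only:) (rule sum.union_disjoint, auto simp: finite_length_le)
  also have "(\<Sum>u \<in> {u \<in> A. length u = Suc J}. (1/2::real) ^ length u) =
      card {u \<in> A. length u = Suc J} * (1/2) ^ Suc J"
    by simp
  finally show ?case
    using Suc by simp
qed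

lemma kraft_partial_dom_split:
  fixes Y :: "bool list \<Rightarrow> bool list option"
  assumes "\<And>u. u \<in> dom Y \<Longrightarrow> length (the (Y u)) = n"
  shows "kraft_partial (dom Y) J = (\<Sum>s | length s = n. kraft_partial {u. Y u = Some s} J)"
proof -
  have "{u \<in> dom Y. length u \<le> J} = (\<Union>s \<in> {s. length s = n}. {u \<in> {u. Y u = Some s}. length u \<le> J})"
    using assms by fastforce
  moreover have "finite {u \<in> {u. Y u = Some s}. length u \<le> J}" for s
    by (rule finite_length_le)
  ultimately show ?thesis
    unfolding kraft_partial_def
    by (simp only:) (rule sum.UNION_disjoint, auto simp: finite_length_eq)
qed

(* The tail-sum formula E[L] = sum_j P(L > j), truncated at J. *)
lemma sum_length_weight_eq_kraft_tails:
  "(\<Sum>u \<in> {u \<in> A. length u \<le> J}. length u * (1/2) ^ length u) =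
     (\<Sum>j<J. kraft_partial A J - kraft_partial A j)"
proof -
  let ?D = "{u \<in> A. length u \<le> J}"
  have "kraft_partial A J - kraft_partial A j = (\<Sum>u\<in>?D. if j < length u then (1/2) ^ length u else 0)"
    if "j < J" for j
  proof -
    have "{u \<in> A. length u \<le> j} = {u \<in> ?D. length u \<le> j}"
      using that by auto
    then have "kraft_partial A j = (\<Sum>u \<in> {u \<in> ?D. length u \<le> j}. (1/2) ^ length u)"
      unfolding kraft_partial_def by (simp only:)
    also have "\<dots> = (\<Sum>u\<in>?D. if length u \<le> j then (1/2) ^ length u else 0)"
      by (rule sum.inter_filter[OF finite_length_le])
    finally have "kraft_partial A J - kraft_partial A j =
        (\<Sum>u\<in>?D. (1/2) ^ length u - (if length u \<le> j then (1/2) ^ length u else 0))"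
      unfolding kraft_partial_def[of A J] by (simp only: sum_subtractf)
    also have "\<dots> = (\<Sum>u\<in>?D. if j < length u then (1/2) ^ length u else 0)"
      by (rule sum.cong) auto
    finally show ?thesis .
  qed
  then have "(\<Sum>j<J. kraft_partial A J - kraft_partial A j) =
      (\<Sum>u\<in>?D. \<Sum>j<J. if j < length u then (1/2) ^ length u else 0)"
    by (simp add: sum.swap[of _ ?D])
  also have "\<dots> = (\<Sum>u\<in>?D. length u * (1/2) ^ length u)"
  proof (rule sum.cong)
    fix u
    assume "u \<in> ?D"
    then have "{j \<in> {..<J}. j < length u} = {..<length u}"
      by auto
    then show "(\<Sum>j<J. if j < length u then (1/2::real) ^ length u else 0) = length u * (1/2) ^ length u"
      by (simp add: sum.inter_filter[symmetric])
  qed simp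
  finally show ?thesis ..
qed

lemma entropy_cost_eq_SUP_kraft_tails:
  "entropy_cost Y = (SUP J. ennreal (\<Sum>j<J. kraft_partial (dom Y) J - kraft_partial (dom Y) j))"
proof -
  let ?A = "dom Y" and ?w = "\<lambda>u :: bool list. ennreal (length u * (1/2) ^ length u)"
  have level_cost: "sum ?w {u \<in> ?A. length u \<le> J} =
      ennreal (\<Sum>j<J. kraft_partial ?A J - kraft_partial ?A j)" for J
    by (subst sum_ennreal) (simp_all add: sum_length_weight_eq_kraft_tails)
  have "entropy_cost Y = (SUP F\<in>{F. finite F \<and> F \<subseteq> ?A}. sum ?w F)"
    unfolding entropy_cost_def by (rule nonneg_infsum_complete) simp
  also have "\<dots> = (SUP J. sum ?w {u \<in> ?A. length u \<le> J})"
  proof (rule antisym)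
    show "(SUP F\<in>{F. finite F \<and> F \<subseteq> ?A}. sum ?w F) \<le> (SUP J. sum ?w {u \<in> ?A. length u \<le> J})"
    proof (rule SUP_least)
      fix F
      assume "F \<in> {F. finite F \<and> F \<subseteq> ?A}"
      then obtain J where "F \<subseteq> {u \<in> ?A. length u \<le> J}"
        using finite_subset_length_le by blast
      then have "sum ?w F \<le> sum ?w {u \<in> ?A. length u \<le> J}"
        by (rule sum_mono2[OF finite_length_le]) simp
      then show "sum ?w F \<le> (SUP J. sum ?w {u \<in> ?A. length u \<le> J})"
        by (rule SUP_upper2[OF UNIV_I])
    qed
    show "(SUP J. sum ?w {u \<in> ?A. length u \<le> J}) \<le> (SUP F\<in>{F. finite F \<and> F \<subseteq> ?A}. sum ?w F)"
      by (rule SUP_least, rule SUP_upper) (auto simp: finite_length_le)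
  qed
  finally show ?thesis
    by (simp only: level_cost)
qed

lemma entropy_cost_eq_suminf_kraft_tails:
  assumes "((\<lambda>u. (1/2::real) ^ length u) has_sum 1) (dom Y)"
  shows "entropy_cost Y = (\<Sum>j. ennreal (1 - kraft_partial (dom Y) j))"
proof -
  let ?K = "kraft_partial (dom Y)"
  have K_le_1: "?K j \<le> 1" for j
    by (rule kraft_partial_le_has_sum[OF assms])
  have lim: "?K \<longlonglongrightarrow> 1"
    by (rule has_sum_imp_kraft_partial_LIMSEQ[OF assms])
  have "(\<Sum>j. ennreal (1 - ?K j)) = (SUP J. ennreal (\<Sum>j<J. 1 - ?K j))"
    using K_le_1 by (simp add: suminf_eq_SUP sum_ennreal)
  also have "\<dots> = (SUP J. ennreal (\<Sum>j<J. ?K J - ?K j))"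
  proof (rule antisym)
    show "(SUP J. ennreal (\<Sum>j<J. 1 - ?K j)) \<le> (SUP J. ennreal (\<Sum>j<J. ?K J - ?K j))"
    proof (rule SUP_least)
      fix J
      have "ennreal (\<Sum>j<J. ?K J' - ?K j) \<le> (SUP J. ennreal (\<Sum>j<J. ?K J - ?K j))" if "J \<le> J'" for J'
      proof -
        have "(\<Sum>j<J. ?K J' - ?K j) \<le> (\<Sum>j<J'. ?K J' - ?K j)"
          using that kraft_partial_mono by (intro sum_mono2) auto
        then show ?thesis
          by (intro SUP_upper2[OF UNIV_I] ennreal_leI)
      qed
      moreover have "(\<lambda>J'. ennreal (\<Sum>j<J. ?K J' - ?K j)) \<longlonglongrightarrow> ennreal (\<Sum>j<J. 1 - ?K j)"
        by (intro tendsto_ennrealI tendsto_sum tendsto_diff lim tendsto_const)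
      ultimately show "ennreal (\<Sum>j<J. 1 - ?K j) \<le> (SUP J. ennreal (\<Sum>j<J. ?K J - ?K j))"
        by (intro LIMSEQ_le_const2) auto
    qed
    show "(SUP J. ennreal (\<Sum>j<J. ?K J - ?K j)) \<le> (SUP J. ennreal (\<Sum>j<J. 1 - ?K j))"
      using K_le_1 by (intro SUP_mono' ennreal_leI sum_mono) auto
  qed
  finally show ?thesis
    by (simp add: entropy_cost_eq_SUP_kraft_tails)
qed

section \<open>GenOpt as a generator\<close>

lemma genopt_gen_eq_Some: "genopt_gen p n u = Some s \<longleftrightarrow> genopt_run p n u = Some (s, length u, [])"
  using genopt_run_SomeD[of p n u]
  by (auto simp: genopt_gen_def split: option.splits if_splits)

lemma genopt_gen_length: "genopt_gen p n u = Some s \<Longrightarrow> length s = n"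
  using genopt_gen_eq_Some genopt_run_SomeD by blast

lemma genopt_gen_prefix_free:
  assumes "u \<in> dom (genopt_gen p n)" "v \<noteq> []"
  shows "u @ v \<notin> dom (genopt_gen p n)"
proof -
  from assms(1) obtain s where "genopt_run p n u = Some (s, length u, [])"
    by (auto simp: genopt_gen_eq_Some)
  then have "genopt_run p n (u @ v) = Some (s, length u, v)"
    using genopt_run_append by fastforce
  with assms(2) show ?thesis
    by (auto simp: genopt_gen_def)
qed

lemma kraft_partial_genopt_output:
  assumes "bcpd p" "length s = n"
  shows "kraft_partial {u. genopt_gen p n u = Some s} J = dyadic_floor (p s) J / 2 ^ J"
proof -
  have "{u \<in> {u. genopt_gen p n u = Some s}. length u = m} = arrivals p s m" for m
    using assms(2) by (auto simp: arrivals_def genopt_gen_eq_Some)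
  moreover have "real (card (arrivals p s m)) = digit (p s) m" for m
    using card_arrivals_eq_digit[OF assms(1), of s m] by (metis of_int_of_nat_eq)
  ultimately have "kraft_partial {u. genopt_gen p n u = Some s} J = (\<Sum>m\<le>J. digit (p s) m * (1/2) ^ m)"
    by (simp add: kraft_partial_by_length)
  also have "\<dots> = dyadic_floor (p s) J / 2 ^ J"
    using bcpd_bounds[OF assms(1)] by (simp add: sum_digits_eq_dyadic_floor)
  finally show ?thesis .
qed

lemma kraft_partial_genopt:
  assumes "bcpd p"
  shows "kraft_partial (dom (genopt_gen p n)) J = (\<Sum>s | length s = n. dyadic_floor (p s) J / 2 ^ J)"
proof -
  have "kraft_partial (dom (genopt_gen p n)) J =
      (\<Sum>s | length s = n. kraft_partial {u. genopt_gen p n u = Some s} J)"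
    by (rule kraft_partial_dom_split) (auto dest: genopt_gen_length)
  also have "\<dots> = (\<Sum>s | length s = n. dyadic_floor (p s) J / 2 ^ J)"
    by (rule sum.cong) (simp_all add: kraft_partial_genopt_output[OF assms])
  finally show ?thesis .
qed

lemma genopt_gen_is_rvg:
  assumes "bcpd p"
  shows "is_rvg (genopt_gen p n) n p"
  unfolding is_rvg_def
proof (intro conjI ballI allI impI)
  show "length (the (genopt_gen p n u)) = n" if "u \<in> dom (genopt_gen p n)" for u
    using that genopt_gen_length by auto
  show "u @ v \<notin> dom (genopt_gen p n)" if "u \<in> dom (genopt_gen p n)" "v \<noteq> []" for u v
    using that by (rule genopt_gen_prefix_free)
  have "kraft_partial (dom (genopt_gen p n)) \<longlonglongrightarrow> (\<Sum>s | length s = n. p s)"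
    unfolding kraft_partial_genopt[OF assms] by (intro tendsto_sum dyadic_floor_LIMSEQ)
  then show "((\<lambda>u. (1/2::real) ^ length u) has_sum 1) (dom (genopt_gen p n))"
    by (intro kraft_partial_LIMSEQ_imp_has_sum) (simp add: sum_bcpd_length[OF assms])
  fix s :: "bool list"
  assume "length s = n"
  then have "kraft_partial {u. genopt_gen p n u = Some s} = (\<lambda>J. dyadic_floor (p s) J / 2 ^ J)"
    by (intro ext kraft_partial_genopt_output[OF assms])
  then have "kraft_partial {u. genopt_gen p n u = Some s} \<longlonglongrightarrow> p s"
    by (simp add: dyadic_floor_LIMSEQ)
  moreover have "{u \<in> dom (genopt_gen p n). genopt_gen p n u = Some s} = {u. genopt_gen p n u = Some s}"
    by auto
  ultimately show "((\<lambda>u. (1/2::real) ^ length u) has_sum p s) {u \<in> dom (genopt_gen p n). genopt_gen p n u = Some s}"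
    by (simp add: kraft_partial_LIMSEQ_imp_has_sum)
qed

lemma kraft_partial_rvg_le_genopt:
  assumes "bcpd p" "is_rvg Y n p"
  shows "kraft_partial (dom Y) J \<le> kraft_partial (dom (genopt_gen p n)) J"
proof -
  have "length (the (Y u)) = n" if "u \<in> dom Y" for u
    using assms(2) that by (simp add: is_rvg_def)
  then have "kraft_partial (dom Y) J = (\<Sum>s | length s = n. kraft_partial {u. Y u = Some s} J)"
    by (rule kraft_partial_dom_split)
  also have "\<dots> \<le> (\<Sum>s | length s = n. dyadic_floor (p s) J / 2 ^ J)"
  proof (rule sum_mono)
    fix s :: "bool list"
    assume "s \<in> {s. length s = n}"
    moreover have "{u \<in> dom Y. Y u = Some s} = {u. Y u = Some s}"
      by auto
    ultimately have "((\<lambda>u. (1/2::real) ^ length u) has_sum p s) {u. Y u = Some s}"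
      using assms(2) unfolding is_rvg_def by auto
    then show "kraft_partial {u. Y u = Some s} J \<le> dyadic_floor (p s) J / 2 ^ J"
      by (rule kraft_partial_le_dyadic_floor)
  qed
  also have "\<dots> = kraft_partial (dom (genopt_gen p n)) J"
    by (rule kraft_partial_genopt[OF assms(1), symmetric])
  finally show ?thesis .
qed

lemma entropy_cost_genopt_le:
  assumes "bcpd p" "is_rvg Y n p"
  shows "entropy_cost (genopt_gen p n) \<le> entropy_cost Y"
proof -
  have "entropy_cost (genopt_gen p n) = (\<Sum>j. ennreal (1 - kraft_partial (dom (genopt_gen p n)) j))"
    using genopt_gen_is_rvg[OF assms(1)]
    by (intro entropy_cost_eq_suminf_kraft_tails) (simp add: is_rvg_def)
  also have "\<dots> \<le> (\<Sum>j. ennreal (1 - kraft_partial (dom Y) j))"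
    using kraft_partial_rvg_le_genopt[OF assms] by (intro suminf_le ennreal_leI summableI) simp
  also have "\<dots> = entropy_cost Y"
    using assms(2) by (intro entropy_cost_eq_suminf_kraft_tails[symmetric]) (simp add: is_rvg_def)
  finally show ?thesis .
qed

theorem theorem4p6:
  fixes p :: "bool list \<Rightarrow> real" and n :: nat
  assumes "bcpd p"
  shows "is_rvg (genopt_gen p n) n p \<and>
         entropy_cost (genopt_gen p n) = (INF Y \<in> {Y. is_rvg Y n p}. entropy_cost Y)"
proof
  show rvg: "is_rvg (genopt_gen p n) n p"
    by (rule genopt_gen_is_rvg[OF assms])
  show "entropy_cost (genopt_gen p n) = (INF Y \<in> {Y. is_rvg Y n p}. entropy_cost Y)"
  proof (rule antisym)
    show "entropy_cost (genopt_gen p n) \<le> (INF Y \<in> {Y. is_rvg Y n p}. entropy_cost Y)"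
      using entropy_cost_genopt_le[OF assms] by (simp add: le_INF_iff)
    show "(INF Y \<in> {Y. is_rvg Y n p}. entropy_cost Y) \<le> entropy_cost (genopt_gen p n)"
      using rvg by (simp add: INF_lower)
  qed
qed

end
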